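(* Let $S, U, M \ge 1$ be integers and let $\mu_Q \in \mathbb{R}_{+}^{S \times U}$ with rows $\mu_{q^{(1)}}, \dots, \mu_{q^{(S)}} \in \mathbb{R}_+^{U}$. Let $\mathbb{N} = \{0,1,2,\dots\}$. Say that a subset $\mathcal{M} \subseteq \{1,\dots,S\}$ \emph{suffices for exact matching} if for every agent distribution $X \in \mathbb{N}^{M \times S}$ there exists $\hat X \in \mathbb{N}^{M \times S}$ whose columns indexed by $s \notin \mathcal{M}$ are identically zero and such that $\hat X \mu_Q = X \mu_Q$. Then $\mathcal{M}$ suffices for exact matching if and only if for every $\tilde s \in \{1,\dots,S\} \setminus \mathcal{M}$ there exist nonnegative integers $\alpha_{s\tilde s} \in \mathbb{N}$, $s \in \mathcal{M}$, with $$\sum_{s \in \mathcal{M}} \alpha_{s\tilde s}\, \mu_{q^{(s)}} = \mu_{q^{(\tilde s)}}.$$ Consequently, the minspecies cardinality for exact matching, $\mathcal{D}_{\mathcal{G}_1}(\mu_Q)$ (the minimum cardinality of a subset $\mathcal{M}$ that suffices for exact matching), equals $$\min\Big\{ |\mathcal{M}_1| : \mathcal{M}_1 \subseteq \{1,\dots,S\},\ \forall \tilde s \notin \mathcal{M}_1\ \exists (\alpha_{s\tilde s})_{s\in\mathcal{M}_1} \in \mathbb{N}^{\mathcal{M}_1} \text{ with } \textstyle\sum_{s \in \mathcal{M}_1} \alpha_{s\tilde s}\, \mu_{q^{(s)}} = \mu_{q^{(\tilde s)}} \Big\}.$$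
   Context: A heterogeneous team consists of $S$ species; $\mu_Q$ is the expected species-trait matrix whose $(s,u)$ entry is the expected value of trait $u$ for an agent of species $s$. There are $M$ tasks; an agent distribution is a matrix $X \in \mathbb{N}^{M\times S}$ whose $(i,s)$ entry is the number of agents of species $s$ assigned to task $i$, and the resulting expected task-trait distribution is $X\mu_Q \in \mathbb{R}_+^{M\times U}$. The exact-matching goal for a desired trait distribution $Y^*$ requires $X\mu_Q = Y^*$. The number of available agents per species is not bounded in this statement. *)

theory Defs
  imports Complex_Main
begin

text \<open>Species are indexed 0..<S, traits 0..<U, tasks 0..<M.
  The expected species-trait matrix is mu :: nat => nat => real (entry mu s u),
  an agent distribution is X :: nat => nat => nat (entry X i s).\<close>

definition task_trait :: "nat \<Rightarrow> (nat \<Rightarrow> nat \<Rightarrow> nat) \<Rightarrow> (nat \<Rightarrow> nat \<Rightarrow> real) \<Rightarrow> nat \<Rightarrow> nat \<Rightarrow> real" where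
  "task_trait S X mu i u = (\<Sum>s<S. real (X i s) * mu s u)"

definition suffices_exact ::
  "nat \<Rightarrow> nat \<Rightarrow> nat \<Rightarrow> (nat \<Rightarrow> nat \<Rightarrow> real) \<Rightarrow> nat set \<Rightarrow> bool" where
  "suffices_exact S U M mu Ms \<longleftrightarrow>
     (\<forall>X :: nat \<Rightarrow> nat \<Rightarrow> nat. \<exists>Xh :: nat \<Rightarrow> nat \<Rightarrow> nat.
        (\<forall>i<M. \<forall>s<S. s \<notin> Ms \<longrightarrow> Xh i s = 0) \<and>
        (\<forall>i<M. \<forall>u<U. task_trait S Xh mu i u = task_trait S X mu i u))"

definition int_comb_cond :: "nat \<Rightarrow> nat \<Rightarrow> (nat \<Rightarrow> nat \<Rightarrow> real) \<Rightarrow> nat set \<Rightarrow> bool" where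
  "int_comb_cond S U mu Ms \<longleftrightarrow>
     (\<forall>t\<in>{..<S} - Ms. \<exists>\<alpha> :: nat \<Rightarrow> nat.
        \<forall>u<U. (\<Sum>s\<in>Ms. real (\<alpha> s) * mu s u) = mu t u)"

definition minspecies_exact :: "nat \<Rightarrow> nat \<Rightarrow> nat \<Rightarrow> (nat \<Rightarrow> nat \<Rightarrow> real) \<Rightarrow> nat" where
  "minspecies_exact S U M mu = Min {card Ms | Ms. Ms \<subseteq> {..<S} \<and> suffices_exact S U M mu Ms}"

end

theory Submission
  imports Defs
begin

text \<open>Testing the distribution consisting of a single agent of species \<open>t \<notin> Ms\<close> shows that
  \<open>\<mu>\<^sub>t\<close> must be a nonnegative integer combination of the rows indexed by \<open>Ms\<close>.
  Conversely, given such combinations, replace in any distribution every agent of a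
  species \<open>t \<notin> Ms\<close> by \<open>\<alpha>\<^sub>s\<^sub>t\<close> agents of each species \<open>s \<in> Ms\<close>; since the task-trait
  distribution is linear in the agent counts, it does not change.\<close>

lemma task_trait_split:
  assumes "Ms \<subseteq> {..<S}"
  shows "task_trait S X mu i u
    = (\<Sum>s\<in>Ms. real (X i s) * mu s u) + (\<Sum>t\<in>{..<S} - Ms. real (X i t) * mu t u)"
  unfolding task_trait_def using sum.subset_diff[OF assms] by (metis add.commute finite_lessThan)

lemma task_trait_supported:
  assumes "Ms \<subseteq> {..<S}" and "\<forall>s<S. s \<notin> Ms \<longrightarrow> X i s = 0"
  shows "task_trait S X mu i u = (\<Sum>s\<in>Ms. real (X i s) * mu s u)"
  using assms by (simp add: task_trait_split)

lemma task_trait_single_agent: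
  assumes "t < S"
  shows "task_trait S (\<lambda>i s. if s = t then 1 else 0) mu i u = mu t u"
proof -
  have "task_trait S (\<lambda>i s. if s = t then 1 else 0) mu i u
      = (\<Sum>s<S. if s = t then mu s u else 0)"
    unfolding task_trait_def by (rule sum.cong) auto
  with assms show ?thesis by simp
qed

lemma int_comb_cond_if_suffices_exact:
  assumes "M \<ge> 1" and "Ms \<subseteq> {..<S}" and "suffices_exact S U M mu Ms"
  shows "int_comb_cond S U mu Ms"
  unfolding int_comb_cond_def
proof
  fix t assume t: "t \<in> {..<S} - Ms"
  obtain Xh where supp: "\<forall>i<M. \<forall>s<S. s \<notin> Ms \<longrightarrow> Xh i s = 0"
    and same: "\<forall>i<M. \<forall>u<U. task_trait S Xh mu i u
                 = task_trait S (\<lambda>i s. if s = t then 1 else 0) mu i u"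
    using assms(3) unfolding suffices_exact_def by blast
  have "0 < M" using assms(1) by simp
  then have "\<forall>u<U. (\<Sum>s\<in>Ms. real (Xh 0 s) * mu s u) = mu t u"
    using same supp t task_trait_supported[OF assms(2)] task_trait_single_agent by simp
  then show "\<exists>\<alpha>. \<forall>u<U. (\<Sum>s\<in>Ms. real (\<alpha> s) * mu s u) = mu t u" by blast
qed

lemma suffices_exact_if_int_comb_cond:
  assumes sub: "Ms \<subseteq> {..<S}" and "int_comb_cond S U mu Ms"
  shows "suffices_exact S U M mu Ms"
  unfolding suffices_exact_def
proof
  fix X :: "nat \<Rightarrow> nat \<Rightarrow> nat"
  define T where "T = {..<S} - Ms"
  have "\<forall>t\<in>T. \<exists>\<alpha>. \<forall>u<U. (\<Sum>s\<in>Ms. real (\<alpha> s) * mu s u) = mu t u"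
    using assms(2) unfolding int_comb_cond_def T_def .
  then obtain A where A: "\<forall>t\<in>T. \<forall>u<U. (\<Sum>s\<in>Ms. real (A t s) * mu s u) = mu t u"
    by (auto dest: bchoice)
  define Xh where "Xh i s = (if s \<in> Ms then X i s + (\<Sum>t\<in>T. X i t * A t s) else 0)" for i s
  have "task_trait S Xh mu i u = task_trait S X mu i u" if u: "u < U" for i u
  proof -
    have "task_trait S Xh mu i u = (\<Sum>s\<in>Ms. real (Xh i s) * mu s u)"
      using sub by (intro task_trait_supported) (auto simp: Xh_def)
    also have "\<dots> = (\<Sum>s\<in>Ms. real (X i s) * mu s u)
          + (\<Sum>s\<in>Ms. \<Sum>t\<in>T. real (X i t) * (real (A t s) * mu s u))"
      unfolding Xh_def by (simp add: sum.distrib algebra_simps sum_distrib_left sum_distrib_right)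
    also have "(\<Sum>s\<in>Ms. \<Sum>t\<in>T. real (X i t) * (real (A t s) * mu s u))
        = (\<Sum>t\<in>T. real (X i t) * (\<Sum>s\<in>Ms. real (A t s) * mu s u))"
      by (simp add: sum.swap[of _ Ms] sum_distrib_left)
    also have "\<dots> = (\<Sum>t\<in>T. real (X i t) * mu t u)"
      using A u by simp
    finally show ?thesis
      using task_trait_split[OF sub] unfolding T_def by simp
  qed
  then show "\<exists>Xh. (\<forall>i<M. \<forall>s<S. s \<notin> Ms \<longrightarrow> Xh i s = 0) \<and>
      (\<forall>i<M. \<forall>u<U. task_trait S Xh mu i u = task_trait S X mu i u)"
    by (intro exI[of _ Xh]) (simp add: Xh_def)
qed

lemma suffices_exact_iff_int_comb_cond:
  assumes "M \<ge> 1" and "Ms \<subseteq> {..<S}"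
  shows "suffices_exact S U M mu Ms \<longleftrightarrow> int_comb_cond S U mu Ms"
  using assms int_comb_cond_if_suffices_exact suffices_exact_if_int_comb_cond by blast

theorem proposition1:
  fixes S U M :: nat and mu :: "nat \<Rightarrow> nat \<Rightarrow> real"
  assumes "S \<ge> 1" and "U \<ge> 1" and "M \<ge> 1"
    and "\<forall>s<S. \<forall>u<U. mu s u \<ge> 0"
  shows "(\<forall>Ms. Ms \<subseteq> {..<S} \<longrightarrow>
            (suffices_exact S U M mu Ms \<longleftrightarrow> int_comb_cond S U mu Ms))
     \<and> minspecies_exact S U M mu
         = Min {card Ms | Ms. Ms \<subseteq> {..<S} \<and> int_comb_cond S U mu Ms}"
proof -
  have iff: "\<forall>Ms. Ms \<subseteq> {..<S} \<longrightarrow>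
      (suffices_exact S U M mu Ms \<longleftrightarrow> int_comb_cond S U mu Ms)"
    using suffices_exact_iff_int_comb_cond[OF assms(3)] by blast
  then have "{card Ms | Ms. Ms \<subseteq> {..<S} \<and> suffices_exact S U M mu Ms}
     = {card Ms | Ms. Ms \<subseteq> {..<S} \<and> int_comb_cond S U mu Ms}"
    by blast
  with iff show ?thesis
    unfolding minspecies_exact_def by simp
qed

end
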